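(* Let $T=\{t_1,\ldots,t_N\}$ be documents, each containing at most $L$ distinct words from a dictionary $\{w_1,\ldots,w_D\}$, and let $\#(w)$ denote the number of documents containing word $w$. Let $h_1,\ldots,h_k$ be hash functions such that the values $h_j(t)$, over all $j$ and all documents $t$, are independent and uniformly distributed on $[0,1]$. For a word $w$ and hash function $h$, let $g(w)=\min_{t\,:\,w\in t}h(t)$ (the MinHash of $w$ under $h$). Consider the mapper MinHashSampleMap which, for each document $t$, each word $w$ in $t$, and each $j=1,\ldots,k$, emits $((w,j)\to h_j(t))$ if and only if $h_j(t)\le\frac{c\log(Dk)}{\#(w)}$, with $c=3$. Then with probability at least $1-\frac{1}{(Dk)^2}$, for all words $w$ and all hash functions $h\in\{h_1,\ldots,h_k\}$, MinHashSampleMap emits the hash value of the document that realizes $g(w)$.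
   Context: $\log$ denotes the natural logarithm. *)

theory Defs
  imports "HOL-Probability.Probability"
begin

text \<open>Documents are indexed by i < N, T i is the set of words of document i;
words are w < D; hash functions are indexed by j < k; h j i is the value h_j(t_i).\<close>

definition doc_count :: "(nat \<Rightarrow> nat set) \<Rightarrow> nat \<Rightarrow> nat \<Rightarrow> nat" where
  "doc_count T N w = card {i. i < N \<and> w \<in> T i}"

definition minhash :: "(nat \<Rightarrow> nat set) \<Rightarrow> nat \<Rightarrow> (nat \<Rightarrow> nat \<Rightarrow> real) \<Rightarrow> nat \<Rightarrow> nat \<Rightarrow> real" where
  "minhash T N h j w = Min {h j i | i. i < N \<and> w \<in> T i}"

definition minhash_sample_map ::
  "real \<Rightarrow> nat \<Rightarrow> nat \<Rightarrow> (nat \<Rightarrow> nat set) \<Rightarrow> nat \<Rightarrow> (nat \<Rightarrow> nat \<Rightarrow> real) \<Rightarrow> ((nat \<times> nat) \<times> real) set" where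
  "minhash_sample_map c D k T N h =
     {((w, j), h j i) | w j i. i < N \<and> w \<in> T i \<and> j < k \<and>
        h j i \<le> c * ln (real D * real k) / real (doc_count T N w)}"

end

theory Submission imports Defs begin

text \<open>The MinHash of w under h_j is emitted as soon as some document containing w has
  its j-th hash below the threshold, since the minimum is then below it as well. So it is
  missed only if all #(w) independent uniform hashes of these documents exceed
  \<open>\<tau> = c log(Dk) / #(w)\<close>, which has probability at most \<open>exp (-\<tau>)^#(w) = (Dk)^-c\<close>.
  A union bound over the at most Dk pairs (w, j) finishes the proof for c = 3.\<close>

lemma minhash_in_sample_map_iff:
  assumes "doc_count T N w > 0" "j < k"
  shows "((w, j), minhash T N h j w) \<in> minhash_sample_map c D k T N h \<longleftrightarrow>
    (\<exists>i<N. w \<in> T i \<and> h j i \<le> c * ln (real D * real k) / real (doc_count T N w))"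
    (is "_ \<longleftrightarrow> (\<exists>i<N. w \<in> T i \<and> h j i \<le> ?\<tau>)")
proof
  assume "((w, j), minhash T N h j w) \<in> minhash_sample_map c D k T N h"
  then show "\<exists>i<N. w \<in> T i \<and> h j i \<le> ?\<tau>"
    unfolding minhash_sample_map_def by auto
next
  let ?A = "{h j i | i. i < N \<and> w \<in> T i}"
  assume "\<exists>i<N. w \<in> T i \<and> h j i \<le> ?\<tau>"
  then obtain i where i: "i < N" "w \<in> T i" "h j i \<le> ?\<tau>" by blast
  have "?A \<noteq> {}"
    using assms(1) unfolding doc_count_def by (metis (mono_tags, lifting) card.empty empty_Collect_eq less_irrefl)
  then have "Min ?A \<in> ?A" by (intro Min_in) simp_all
  then obtain i0 where i0: "i0 < N" "w \<in> T i0" "minhash T N h j w = h j i0"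
    unfolding minhash_def by auto
  have "minhash T N h j w \<le> h j i"
    unfolding minhash_def using i by (intro Min_le) auto
  with i i0 assms(2) show "((w, j), minhash T N h j w) \<in> minhash_sample_map c D k T N h"
    unfolding minhash_sample_map_def by force
qed

lemma uniform_tail_le_exp:
  fixes \<tau> :: real
  shows "measure (uniform_measure lborel {0..1}) {\<tau><..} \<le> exp (- \<tau>)"
proof (cases "\<tau> < 0")
  case True
  then have "{0..1::real} \<inter> {\<tau><..} = {0..1}" by auto
  then show ?thesis using True by simp
next
  case nonneg: False
  show ?thesis
  proof (cases "\<tau> < 1")
    case True
    then have "{0..1::real} \<inter> {\<tau><..} = {\<tau><..1}" using nonneg by auto
    then show ?thesis using True exp_ge_add_one_self[of "- \<tau>"] by simp
  next
    case False
    then have "{0..1::real} \<inter> {\<tau><..} = {}" by auto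
    then show ?thesis by simp
  qed
qed

lemma (in prob_space) prob_indep_uniform_all_greater_le_exp:
  fixes Y :: "'i \<Rightarrow> 'a \<Rightarrow> real"
  assumes indep: "indep_vars (\<lambda>_. borel) Y I"
    and unif: "\<forall>i\<in>I. distr M borel (Y i) = uniform_measure lborel {0..1}"
    and S: "S \<subseteq> I" "finite S" "S \<noteq> {}"
  shows "prob (\<Inter>i\<in>S. Y i -` {\<tau><..} \<inter> space M) \<le> exp (- \<tau> * real (card S))"
proof -
  have meas: "Y i \<in> borel_measurable M" if "i \<in> I" for i
    using indep that unfolding indep_vars_def2 by fastforce
  have tail: "prob (Y i -` {\<tau><..} \<inter> space M) \<le> exp (- \<tau>)" if "i \<in> I" for i
  proof -
    have "prob (Y i -` {\<tau><..} \<inter> space M) = measure (distr M borel (Y i)) {\<tau><..}"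
      using meas[OF that] by (simp add: measure_distr)
    then show ?thesis
      using uniform_tail_le_exp[of \<tau>] unif that by simp
  qed
  have "prob (\<Inter>i\<in>S. Y i -` {\<tau><..} \<inter> space M) = (\<Prod>i\<in>S. prob (Y i -` {\<tau><..} \<inter> space M))"
    using indep S unfolding indep_vars_def2
    by (intro indep_setsD[where I = I]) (auto intro!: exI[of _ "{\<tau><..}"])
  also have "\<dots> \<le> (\<Prod>i\<in>S. exp (- \<tau>))"
    using S tail by (intro prod_mono) auto
  also have "\<dots> = exp (- \<tau> * real (card S))"
    by (simp add: exp_of_nat_mult[symmetric] mult.commute)
  finally show ?thesis .
qed

lemma (in prob_space) prob_minhash_missed:
  fixes X :: "nat \<Rightarrow> nat \<Rightarrow> 'a \<Rightarrow> real" and c :: real and D :: nat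
  assumes indep: "indep_vars (\<lambda>_. borel) (\<lambda>(j, i). X j i) ({..<k} \<times> {..<N})"
    and unif: "\<forall>j<k. \<forall>i<N. distr M borel (X j i) = uniform_measure lborel {0..1}"
    and w: "doc_count T N w > 0" and j: "j < k"
  defines "missed \<equiv> {x \<in> space M. ((w, j), minhash T N (\<lambda>j i. X j i x) j w)
                          \<notin> minhash_sample_map c D k T N (\<lambda>j i. X j i x)}"
  shows "missed \<in> events" and "prob missed \<le> exp (- c * ln (real D * real k))"
proof -
  define S where "S = {j} \<times> {i. i < N \<and> w \<in> T i}"
  define \<tau> where "\<tau> = c * ln (real D * real k) / real (doc_count T N w)"
  have card_S: "card S = doc_count T N w"
    unfolding S_def doc_count_def by (simp add: card_cartesian_product)
  have "{i. i < N \<and> w \<in> T i} \<noteq> {}"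
    using w unfolding doc_count_def by (metis card.empty less_irrefl)
  then have S: "S \<subseteq> {..<k} \<times> {..<N}" "finite S" "S \<noteq> {}"
    using j unfolding S_def by auto
  have missed_eq: "missed = (\<Inter>p\<in>S. (\<lambda>(j, i). X j i) p -` {\<tau><..} \<inter> space M)"
    using S(3) unfolding missed_def \<tau>_def minhash_in_sample_map_iff[OF w j]
    by (auto simp: S_def not_le)
  have "(\<lambda>(j, i). X j i) p \<in> borel_measurable M" if "p \<in> S" for p
    using indep S(1) that unfolding indep_vars_def2 by blast
  then show "missed \<in> events"
    unfolding missed_eq using S(2,3) by (intro sets.finite_INT) (auto simp: measurable_sets)
  have "prob missed \<le> exp (- \<tau> * real (card S))"
    unfolding missed_eq using S unif
    by (intro prob_indep_uniform_all_greater_le_exp[OF indep]) auto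
  also have "- \<tau> * real (card S) = - c * ln (real D * real k)"
    using w unfolding \<tau>_def card_S by simp
  finally show "prob missed \<le> exp (- c * ln (real D * real k))" .
qed

lemma (in prob_space) prob_finite_UN_le_card_mult:
  assumes "finite P" "\<And>p. p \<in> P \<Longrightarrow> A p \<in> events" "\<And>p. p \<in> P \<Longrightarrow> prob (A p) \<le> b"
  shows "prob (\<Union>p\<in>P. A p) \<le> real (card P) * b"
proof -
  have "prob (\<Union>p\<in>P. A p) \<le> (\<Sum>p\<in>P. prob (A p))"
    using assms by (intro finite_measure_subadditive_finite) auto
  also have "\<dots> \<le> (\<Sum>p\<in>P. b)"
    using assms by (intro sum_mono) auto
  finally show ?thesis by simp
qed

lemma mult_exp_neg_three_ln:
  fixes x :: real
  assumes "0 < x"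
  shows "x * exp (- 3 * ln x) = 1 / x ^ 2"
proof -
  have "exp (- 3 * ln x) = 1 / x ^ 3"
    using assms by (simp add: exp_minus exp_of_nat_mult[of 3, simplified] divide_inverse)
  then show ?thesis using assms by (simp add: power3_eq_cube power2_eq_square)
qed

theorem theorem5:
  fixes M :: "'a measure" and X :: "nat \<Rightarrow> nat \<Rightarrow> 'a \<Rightarrow> real"
    and T :: "nat \<Rightarrow> nat set" and N D L k :: nat
  assumes "prob_space M"
    and docs: "\<forall>i<N. T i \<subseteq> {..<D} \<and> card (T i) \<le> L"
    and indep: "prob_space.indep_vars M (\<lambda>_. borel) (\<lambda>(j, i). X j i) ({..<k} \<times> {..<N})"
    and unif: "\<forall>j<k. \<forall>i<N. distr M borel (X j i) = uniform_measure lborel {0..1}"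
  shows "prob_space.prob M
           {x \<in> space M. \<forall>w<D. \<forall>j<k. doc_count T N w > 0 \<longrightarrow>
              ((w, j), minhash T N (\<lambda>j i. X j i x) j w)
                \<in> minhash_sample_map 3 D k T N (\<lambda>j i. X j i x)}
         \<ge> 1 - 1 / (real D * real k)^2"
    (is "prob_space.prob M ?good \<ge> _")
proof -
  interpret prob_space M by fact
  define P where "P = {p \<in> {..<D} \<times> {..<k}. doc_count T N (fst p) > 0}"
  define missed where "missed p = {x \<in> space M.
      (p, minhash T N (\<lambda>j i. X j i x) (snd p) (fst p)) \<notin> minhash_sample_map 3 D k T N (\<lambda>j i. X j i x)}" for p
  have missed: "missed p \<in> events" "prob (missed p) \<le> exp (- 3 * ln (real D * real k))" if "p \<in> P" for p
    using that prob_minhash_missed[OF indep unif] unfolding missed_def P_def by (auto simp: case_prod_beta)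
  have fin_P: "finite P" unfolding P_def by simp
  have "card P \<le> D * k"
    using card_mono[of "{..<D} \<times> {..<k}" P] unfolding P_def by (auto simp: card_cartesian_product)
  then have card_P: "real (card P) \<le> real D * real k"
    by (metis of_nat_le_iff of_nat_mult)
  have "prob (\<Union>p\<in>P. missed p) \<le> real (card P) * exp (- 3 * ln (real D * real k))"
    using fin_P missed by (rule prob_finite_UN_le_card_mult)
  also have "\<dots> \<le> real D * real k * exp (- 3 * ln (real D * real k))"
    using card_P by (intro mult_right_mono) auto
  also have "\<dots> \<le> 1 / (real D * real k) ^ 2"
  proof (cases "D = 0 \<or> k = 0")
    case False
    then show ?thesis using mult_exp_neg_three_ln[of "real D * real k"] by simp
  qed auto
  finally have "prob (\<Union>p\<in>P. missed p) \<le> 1 / (real D * real k) ^ 2" .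
  moreover have "?good = space M - (\<Union>p\<in>P. missed p)"
    unfolding P_def missed_def by auto
  ultimately show ?thesis
    using prob_compl[of "\<Union>p\<in>P. missed p"] fin_P missed by auto
qed

end
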